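(* Let $M=M(\mathbb{1},\lambda,e,V)$ be the generic characteristic matrix of a $\mathbb{Z}^d$-periodic graph specialized at $z=\mathbb{1}=(1,\dots,1)$ (a symmetric $n\times n$ matrix). For any cycle cover $c$ of $[n]$ with $M_c\neq 0$, any monomial occurring in $M_c$ determines $c$: if a monomial (in $\lambda,e,V$) occurs in both $M_c$ and $M_{c'}$ for cycle covers $c,c'$ with $M_c,M_{c'}\neq 0$, then $c=c'$.
   Context: A $\mathbb{Z}^d$-periodic graph $\Gamma$ is a simple undirected graph of bounded degree with a free $\mathbb{Z}^d$-action by automorphisms, $(\alpha,v)\mapsto\alpha+v$, with finitely many vertex and edge orbits; $W$ is a set of orbit representatives of vertices, identified with $[n]=\{1,\dots,n\}$. The generic characteristic matrix is $M(z,\lambda,e,V)=\lambda I_n-H(z,e,V)$, where $H(z,e,V)$ has $(v,u)$ entry $\delta_{v,u}V(v)-\sum_{\alpha\in\mathbb{Z}^d: v\sim\alpha+u}e_{(v,\alpha+u)}z^\alpha$ with independent indeterminates $e$ (one per edge orbit, $e_{(u,v)}=e_{(v,u)}$) and $V(v)$ (one per $v\in W$). For $w\in S_n$, $|w|$ is the multigraph on $[n]$ with one edge $\{i,w(i)\}$ for each $i$ (fixed points give loops, 2-cycles give double edges); such a graph is a cycle cover of $[n]$. For a symmetric matrix $M=(f_{i,j})$ and a cycle cover $c$, $M_c$ denotes $M_w=f_{1,w(1)}\cdots f_{n,w(n)}$ for any $w$ with $|w|=c$ (this depends only on $c$). *)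

theory Defs
  imports "HOL-Analysis.Finite_Cartesian_Product" "HOL-Library.Poly_Mapping"
          "HOL-Library.Multiset" "HOL-Combinatorics.Permutations"
begin

text \<open>Vertices of a Z^d-periodic graph with vertex orbit representatives W = {0..<n}:
  the vertex alpha + v is encoded as the pair (alpha, v).\<close>
type_synonym 'd vertex = "(int ^ 'd) \<times> nat"

definition translate :: "int ^ ('d::finite) \<Rightarrow> 'd vertex \<Rightarrow> 'd vertex" where
  "translate \<beta> x = (\<beta> + fst x, snd x)"

definition periodic_graph :: "nat \<Rightarrow> (('d::finite) vertex \<Rightarrow> 'd vertex \<Rightarrow> bool) \<Rightarrow> bool" where
  "periodic_graph n adj \<longleftrightarrow>
     (\<forall>x y. adj x y \<longrightarrow> snd x < n \<and> snd y < n) \<and>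
     (\<forall>x y. adj x y \<longleftrightarrow> adj y x) \<and>
     (\<forall>x. \<not> adj x x) \<and>
     (\<forall>\<beta> x y. adj (translate \<beta> x) (translate \<beta> y) \<longleftrightarrow> adj x y) \<and>
     finite {(v, \<alpha>, u). adj (0, v) (\<alpha>, u)}"

definition edge_orbit :: "('d::finite) vertex \<Rightarrow> 'd vertex \<Rightarrow> 'd vertex set set" where
  "edge_orbit x y = {{translate \<beta> x, translate \<beta> y} | \<beta>. True}"

datatype ('d::finite) indet = Lam | Vpot nat | Eorb "'d vertex set set"

type_synonym 'd monomial = "'d indet \<Rightarrow>\<^sub>0 nat"
type_synonym 'd mpoly = "'d monomial \<Rightarrow>\<^sub>0 int"

definition Var :: "('d::finite) indet \<Rightarrow> 'd mpoly" where
  "Var x = Poly_Mapping.single (Poly_Mapping.single x 1) 1"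

text \<open>Entry (v,u) of M(1,lambda,e,V) = lambda I - H(1,e,V).\<close>
definition charM1 :: "(('d::finite) vertex \<Rightarrow> 'd vertex \<Rightarrow> bool) \<Rightarrow> nat \<Rightarrow> nat \<Rightarrow> 'd mpoly" where
  "charM1 adj v u =
     (if v = u then Var Lam - Var (Vpot v) else 0) +
     (\<Sum>\<alpha>\<in>{\<alpha>. adj (0, v) (\<alpha>, u)}. Var (Eorb (edge_orbit (0, v) (\<alpha>, u))))"

definition Mperm :: "(('d::finite) vertex \<Rightarrow> 'd vertex \<Rightarrow> bool) \<Rightarrow> nat \<Rightarrow> (nat \<Rightarrow> nat) \<Rightarrow> 'd mpoly" where
  "Mperm adj n w = (\<Prod>i<n. charM1 adj i (w i))"

text \<open>The cycle cover |w|: multiset of edges {i, w i} (loops are singletons,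
  2-cycles give a double edge).\<close>
definition cycle_cover :: "nat \<Rightarrow> (nat \<Rightarrow> nat) \<Rightarrow> nat set multiset" where
  "cycle_cover n w = image_mset (\<lambda>i. {i, w i}) (mset_set {..<n})"

end

theory Submission
  imports Defs
begin

(* A monomial of M_w = f_{1,w(1)} ... f_{n,w(n)} picks one indeterminate from each entry
  f_{i,w(i)}: either lambda, which only occurs on the diagonal, i.e. at a fixed point of w, or an
  indeterminate V(i) or e_E whose endpoints in W are exactly {i, w(i)}. Reading the non-lambda
  indeterminates as their endpoint sets therefore lists the edges of |w| at the non-lambda
  positions. The lambda positions are fixed points of w, so by injectivity of w they are exactly
  the vertices that no other indeterminate of the monomial touches. Thus |w| is a function of the
  monomial alone. *)

lemma keys_prod:
  assumes "finite A"
  shows "Poly_Mapping.keys (\<Prod>i\<in>A. f i) \<subseteq> {\<Sum>i\<in>A. g i | g. \<forall>i\<in>A. g i \<in> Poly_Mapping.keys (f i)}"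
  using assms
proof (induction A rule: finite_induct)
  case (insert a A)
  show ?case
  proof
    fix k assume "k \<in> Poly_Mapping.keys (\<Prod>i\<in>insert a A. f i)"
    then obtain b c where k: "k = b + c" "b \<in> Poly_Mapping.keys (f a)"
        "c \<in> Poly_Mapping.keys (\<Prod>i\<in>A. f i)"
      using insert.hyps keys_mult by fastforce
    then obtain g where g: "\<forall>i\<in>A. g i \<in> Poly_Mapping.keys (f i)" "c = (\<Sum>i\<in>A. g i)"
      using insert.IH by blast
    have "(\<Sum>i\<in>A. (g(a := b)) i) = c"
      using insert.hyps g(2) by (auto intro: sum.cong)
    then have "k = (\<Sum>i\<in>insert a A. (g(a := b)) i)"
      using insert.hyps k(1) by simp
    moreover have "\<forall>i\<in>insert a A. (g(a := b)) i \<in> Poly_Mapping.keys (f i)"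
      using insert.hyps g(1) k(2) by auto
    ultimately show "k \<in> {\<Sum>i\<in>insert a A. g i | g. \<forall>i\<in>insert a A. g i \<in> Poly_Mapping.keys (f i)}"
      by blast
  qed
qed simp

definition indets :: "('a \<Rightarrow>\<^sub>0 nat) \<Rightarrow> 'a multiset" where
  "indets m = Abs_multiset (Poly_Mapping.lookup m)"

lemma count_indets [simp]: "count (indets m) = Poly_Mapping.lookup m"
proof -
  have "{x. 0 < Poly_Mapping.lookup m x} = Poly_Mapping.keys m"
    by (auto simp: in_keys_iff)
  then show ?thesis
    by (simp add: indets_def)
qed

lemma indets_zero [simp]: "indets 0 = {#}"
  by (rule multiset_eqI) simp

lemma indets_add [simp]: "indets (a + b) = indets a + indets b"
  by (rule multiset_eqI) (simp add: lookup_add)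

lemma indets_single [simp]: "indets (Poly_Mapping.single x k) = replicate_mset k x"
  by (rule multiset_eqI) (simp add: lookup_single when_def)

lemma indets_sum: "indets (\<Sum>i\<in>A. f i) = (\<Sum>i\<in>A. indets (f i))"
  by (induction A rule: infinite_finite_induct) simp_all

lemma snd_Union_edge_orbit [simp]: "snd ` \<Union> (edge_orbit x y) = {snd x, snd y}"
proof
  show "snd ` \<Union> (edge_orbit x y) \<subseteq> {snd x, snd y}"
    by (auto simp: edge_orbit_def translate_def)
  have "{translate 0 x, translate 0 y} \<in> edge_orbit x y"
    unfolding edge_orbit_def by blast
  then have "{x, y} \<in> edge_orbit x y"
    by (simp add: translate_def)
  then show "{snd x, snd y} \<subseteq> snd ` \<Union> (edge_orbit x y)"
    by blast
qed

primrec endpoints :: "('d::finite) indet \<Rightarrow> nat set" where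
  "endpoints Lam = {}"
| "endpoints (Vpot v) = {v}"
| "endpoints (Eorb E) = snd ` \<Union> E"

lemma keys_Var: "Poly_Mapping.keys (Var x) = {Poly_Mapping.single x 1}"
  by (simp add: Var_def)

(* Oriented as j = i so that, for j = w i, simp rewrites w i to i. *)
definition occurs_in_entry :: "nat \<Rightarrow> nat \<Rightarrow> ('d::finite) indet \<Rightarrow> bool" where
  "occurs_in_entry i j x \<longleftrightarrow> (if x = Lam then j = i else endpoints x = {i, j})"

lemma keys_charM1:
  "Poly_Mapping.keys (charM1 adj i j) \<subseteq>
     (\<lambda>x. Poly_Mapping.single x 1) ` Collect (occurs_in_entry i j)"
    (is "_ \<subseteq> ?K")
proof -
  have diag: "Poly_Mapping.keys (if i = j then Var Lam - Var (Vpot i) else 0) \<subseteq> ?K"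
  proof (cases "i = j")
    case True
    have "Poly_Mapping.single Lam 1 \<in> ?K" "Poly_Mapping.single (Vpot i) 1 \<in> ?K"
      using True by (intro imageI; simp add: occurs_in_entry_def)+
    moreover have "Poly_Mapping.keys (Var Lam - Var (Vpot i)) \<subseteq>
        {Poly_Mapping.single Lam 1, Poly_Mapping.single (Vpot i) 1}"
      using keys_diff[of "Var Lam" "Var (Vpot i)"] unfolding keys_Var by blast
    ultimately show ?thesis
      unfolding if_P[OF True] by blast
  qed simp
  have edges: "Poly_Mapping.keys (\<Sum>\<alpha>\<in>{\<alpha>. adj (0, i) (\<alpha>, j)}. Var (Eorb (edge_orbit (0, i) (\<alpha>, j)))) \<subseteq> ?K"
  proof -
    have "Poly_Mapping.single (Eorb (edge_orbit (0, i) (\<alpha>, j))) 1 \<in> ?K" for \<alpha>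
      by (intro imageI) (simp add: occurs_in_entry_def)
    then show ?thesis
      using keys_sum[of "\<lambda>\<alpha>. Var (Eorb (edge_orbit (0, i) (\<alpha>, j)))"]
      unfolding keys_Var by blast
  qed
  have "Poly_Mapping.keys (charM1 adj i j) \<subseteq>
      Poly_Mapping.keys (if i = j then Var Lam - Var (Vpot i) else 0) \<union>
      Poly_Mapping.keys (\<Sum>\<alpha>\<in>{\<alpha>. adj (0, i) (\<alpha>, j)}. Var (Eorb (edge_orbit (0, i) (\<alpha>, j))))"
    unfolding charM1_def by (rule keys_add)
  also have "\<dots> \<subseteq> ?K"
    using diag edges by (rule Un_least)
  finally show ?thesis .
qed

lemma keys_MpermE:
  assumes "m \<in> Poly_Mapping.keys (Mperm adj n w)"
  obtains x where "indets m = image_mset x (mset_set {..<n})"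
    and "\<And>i. i < n \<Longrightarrow> occurs_in_entry i (w i) (x i)"
proof -
  have "m \<in> {\<Sum>i<n. g i | g. \<forall>i\<in>{..<n}. g i \<in> Poly_Mapping.keys (charM1 adj i (w i))}"
    using assms unfolding Mperm_def by (rule subsetD[OF keys_prod[OF finite_lessThan]])
  then obtain g where g: "\<forall>i\<in>{..<n}. g i \<in> Poly_Mapping.keys (charM1 adj i (w i))"
    and m_eq: "m = (\<Sum>i<n. g i)"
    by blast
  have "\<forall>i\<in>{..<n}. \<exists>y. g i = Poly_Mapping.single y 1 \<and> occurs_in_entry i (w i) y"
    using g keys_charM1[of adj] by blast
  then obtain x where x: "\<forall>i\<in>{..<n}. g i = Poly_Mapping.single (x i) 1 \<and> occurs_in_entry i (w i) (x i)"
    by (metis bchoice)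
  have "indets m = (\<Sum>i<n. {#x i#})"
    unfolding m_eq indets_sum using x by (intro sum.cong) simp_all
  also have "\<dots> = image_mset x (mset_set {..<n})"
    by (induction n) (simp_all add: lessThan_Suc)
  finally show ?thesis
    using x by (intro that) auto
qed

definition cover_of_indets :: "nat \<Rightarrow> ('d::finite) indet multiset \<Rightarrow> nat set multiset" where
  "cover_of_indets n X =
     image_mset endpoints (filter_mset (\<lambda>x. x \<noteq> Lam) X) +
     image_mset (\<lambda>i. {i}) (mset_set {i. i < n \<and> (\<forall>x\<in>#X. i \<notin> endpoints x)})"

lemma uncovered_vertices:
  assumes w: "w permutes {..<n}" and x: "\<And>i. i < n \<Longrightarrow> occurs_in_entry i (w i) (x i)"
  shows "{i. i < n \<and> (\<forall>j\<in>{..<n}. i \<notin> endpoints (x j))} =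
    {i. i < n \<and> x i = Lam}"
proof (intro set_eqI iffI)
  fix i assume "i \<in> {i. i < n \<and> (\<forall>j\<in>{..<n}. i \<notin> endpoints (x j))}"
  then have "i < n" "i \<notin> endpoints (x i)"
    by auto
  with x[of i] show "i \<in> {i. i < n \<and> x i = Lam}"
    by (auto simp: occurs_in_entry_def split: if_splits)
next
  fix i assume "i \<in> {i. i < n \<and> x i = Lam}"
  then have i: "i < n" "x i = Lam" "w i = i"
    using x[of i] by (auto simp: occurs_in_entry_def)
  have "i \<notin> endpoints (x j)" if "j < n" for j
  proof (cases "x j = Lam")
    case False
    with i(2) have "j \<noteq> i"
      by auto
    then have "w j \<noteq> w i"
      using permutes_inj[OF w] by (auto dest: injD)
    moreover have "endpoints (x j) = {j, w j}"
      using x[OF that] False by (simp add: occurs_in_entry_def)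
    ultimately show ?thesis
      using \<open>j \<noteq> i\<close> i(3) by auto
  qed simp
  with i(1) show "i \<in> {i. i < n \<and> (\<forall>j\<in>{..<n}. i \<notin> endpoints (x j))}"
    by auto
qed

lemma cycle_cover_eq_cover_of_indets:
  assumes w: "w permutes {..<n}" and x: "\<And>i. i < n \<Longrightarrow> occurs_in_entry i (w i) (x i)"
  shows "cycle_cover n w = cover_of_indets n (image_mset x (mset_set {..<n}))"
proof -
  define F where "F = {i. i < n \<and> x i = Lam}"
  have fin: "finite F" "F \<subseteq> {..<n}"
    by (auto simp: F_def)
  have "{..<n} - F = {i \<in> {..<n}. x i \<noteq> Lam}"
    by (auto simp: F_def)
  then have "filter_mset (\<lambda>y. y \<noteq> Lam) (image_mset x (mset_set {..<n})) =
      image_mset x (mset_set ({..<n} - F))"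
    unfolding image_mset_filter_mset_swap[symmetric] by simp
  moreover have "image_mset endpoints (image_mset x (mset_set ({..<n} - F))) =
      image_mset (\<lambda>i. {i, w i}) (mset_set ({..<n} - F))"
    unfolding image_mset.compositionality using x
    by (intro image_mset_cong) (auto simp: F_def occurs_in_entry_def)
  moreover have "image_mset (\<lambda>i. {i}) (mset_set F) = image_mset (\<lambda>i. {i, w i}) (mset_set F)"
    using x by (intro image_mset_cong) (auto simp: F_def occurs_in_entry_def)
  ultimately have "cover_of_indets n (image_mset x (mset_set {..<n})) =
      image_mset (\<lambda>i. {i, w i}) (mset_set ({..<n} - F)) + image_mset (\<lambda>i. {i, w i}) (mset_set F)"
    by (simp add: cover_of_indets_def uncovered_vertices[OF w x, folded F_def])
  also have "\<dots> = cycle_cover n w"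
  proof -
    have "mset_set (({..<n} - F) \<union> F) = mset_set ({..<n} - F) + mset_set F"
      using fin by (intro mset_set_Union) auto
    moreover have "({..<n} - F) \<union> F = {..<n}"
      using fin by auto
    ultimately show ?thesis
      unfolding cycle_cover_def by (metis image_mset_union)
  qed
  finally show ?thesis
    by (rule sym)
qed

lemma cycle_cover_eq_cover_of_monomial:
  assumes "w permutes {..<n}" and "m \<in> Poly_Mapping.keys (Mperm adj n w)"
  shows "cycle_cover n w = cover_of_indets n (indets m)"
proof -
  obtain x where x: "indets m = image_mset x (mset_set {..<n})"
    "\<And>i. i < n \<Longrightarrow> occurs_in_entry i (w i) (x i)"
    using assms(2) by (rule keys_MpermE) blast
  show ?thesis
    using cycle_cover_eq_cover_of_indets[OF assms(1) x(2)] x(1) by simp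
qed

theorem lemma2p3:
  fixes adj :: "('d::finite) vertex \<Rightarrow> 'd vertex \<Rightarrow> bool"
    and n :: nat and w w' :: "nat \<Rightarrow> nat" and m :: "'d monomial"
  assumes "periodic_graph n adj"
    and "w permutes {..<n}" and "w' permutes {..<n}"
    and "Mperm adj n w \<noteq> 0" and "Mperm adj n w' \<noteq> 0"
    and "Poly_Mapping.lookup (Mperm adj n w) m \<noteq> 0" and "Poly_Mapping.lookup (Mperm adj n w') m \<noteq> 0"
  shows "cycle_cover n w = cycle_cover n w'"
proof -
  have "m \<in> Poly_Mapping.keys (Mperm adj n w)" "m \<in> Poly_Mapping.keys (Mperm adj n w')"
    using assms(6,7) by (simp_all add: in_keys_iff)
  then have "cycle_cover n w = cover_of_indets n (indets m)"
    and "cycle_cover n w' = cover_of_indets n (indets m)"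
    using assms(2,3) by (simp_all add: cycle_cover_eq_cover_of_monomial)
  then show ?thesis
    by simp
qed

end
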